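(* Let $\mu,\kappa>0$ and consider the energy $W(B_e)=\frac{\mu}{2}\Big(\mathrm{tr}\frac{B_e}{(\det B_e)^{1/3}}-3\Big)+\frac{\kappa}{4}\big[(\det B_e-1)-\log\det B_e\big]$ with $B_e=F_eF_e^T$, $F_e\in\mathrm{GL}^+(3)$, and let $\tau_e$ be the associated Kirchhoff stress, whose deviatoric part is $\mathrm{dev}_3\tau_e=\mu\,\mathrm{dev}_3\big(B_e/(\det B_e)^{1/3}\big)$. Then $$\big\langle F_e^{-1}(\mathrm{dev}_3\tau_e)F_e^{-T},\mathbb{1}\big\rangle=\frac{\mu}{(\det B_e)^{4/3}}\Big[3\det B_e-\frac13\,\mathrm{tr}(B_e)\,\mathrm{tr}(\mathrm{Cof}\,B_e)\Big],$$ and this quantity vanishes if and only if $B_e$ is a positive multiple of $\mathbb{1}$, i.e. if and only if $F_e\in\mathbb{R}_+\cdot\mathrm{SO}(3)$. In particular, the right-hand side of the Simo–Hughes flow rule $\frac{d}{dt}[\overline C_p^{-1}]=-\frac23\lambda\,\mathrm{tr}(B_e)\,F^{-1}\frac{\mathrm{dev}_3\tau_e}{\|\mathrm{dev}_3\tau_e\|}F^{-T}$ ($\overline C_p=C_p/(\det C_p)^{1/3}$, $\lambda>0$) in general yields $\frac{d}{dt}\det\overline C_p^{-1}\neq0$.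
   Context: $\langle X,Y\rangle=\mathrm{tr}(XY^T)$, $\|\cdot\|$ Frobenius norm, $\mathrm{dev}_3X=X-\frac13\mathrm{tr}(X)\mathbb{1}$, $\mathrm{Cof}\,X=(\det X)X^{-T}$. Kinematics: $F\in\mathrm{GL}^+(3)$, $F_p\in\mathrm{GL}^+(3)$, $F_e=FF_p^{-1}$, $C_p=F_p^TF_p$; the derivative of $\det\overline C_p^{-1}$ along the flow is $\det\overline C_p^{-1}\langle\mathbb{1},\frac{d}{dt}[\overline C_p^{-1}]\overline C_p\rangle$. *)

theory Defs
  imports "HOL-Analysis.Analysis"
begin

type_synonym mat3 = "real^3^3"

definition frob_inner :: "mat3 \<Rightarrow> mat3 \<Rightarrow> real" where
  "frob_inner X Y = trace (X ** transpose Y)"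

definition frob_norm :: "mat3 \<Rightarrow> real" where
  "frob_norm X = sqrt (frob_inner X X)"

definition dev3 :: "mat3 \<Rightarrow> mat3" where
  "dev3 X = X - ((1/3) * trace X) *\<^sub>R mat 1"

definition Cof :: "mat3 \<Rightarrow> mat3" where
  "Cof X = det X *\<^sub>R matrix_inv (transpose X)"

definition GLplus :: "mat3 set" where
  "GLplus = {F. det F > 0}"

definition RplusSO3 :: "mat3 set" where
  "RplusSO3 = {c *\<^sub>R Q | c Q. c > 0 \<and> rotation_matrix Q}"

definition Bmat :: "mat3 \<Rightarrow> mat3" where
  "Bmat Fe = Fe ** transpose Fe"

definition W_energy :: "real \<Rightarrow> real \<Rightarrow> mat3 \<Rightarrow> real" where
  "W_energy \<mu> \<kappa> B =
     \<mu>/2 * (trace B / (det B) powr (1/3) - 3) + \<kappa>/4 * ((det B - 1) - ln (det B))"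

definition Cbar_p :: "mat3 \<Rightarrow> mat3" where
  "Cbar_p Fp = (1 / (det (transpose Fp ** Fp)) powr (1/3)) *\<^sub>R (transpose Fp ** Fp)"

text \<open>Right-hand side of the Simo-Hughes flow rule for d/dt [Cbar_p^{-1}], with F = F_e F_p.\<close>
definition SH_rhs :: "real \<Rightarrow> mat3 \<Rightarrow> mat3 \<Rightarrow> mat3 \<Rightarrow> mat3" where
  "SH_rhs lam Fe Fp \<tau> =
     (- (2/3) * lam * trace (Bmat Fe)) *\<^sub>R
       (matrix_inv (Fe ** Fp) ** ((1 / frob_norm (dev3 \<tau>)) *\<^sub>R dev3 \<tau>)
          ** matrix_inv (transpose (Fe ** Fp)))"

text \<open>d/dt det(Cbar_p^{-1}) = det(Cbar_p^{-1}) <1, d/dt[Cbar_p^{-1}] Cbar_p> along the flow.\<close>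
definition SH_ddet :: "real \<Rightarrow> mat3 \<Rightarrow> mat3 \<Rightarrow> mat3 \<Rightarrow> real" where
  "SH_ddet lam Fe Fp \<tau> =
     det (matrix_inv (Cbar_p Fp)) * frob_inner (mat 1) (SH_rhs lam Fe Fp \<tau> ** Cbar_p Fp)"

end

theory Submission
  imports Defs
begin

(* For F = F_e in GL+(3) write B = F F^T, so that B^-1 = F^-T F^-1.  Since dev3 tau is
   mu (det B)^(-1/3) dev3 B, the scalar <F^-1 (dev3 tau) F^-T, 1> equals
   mu (det B)^(-1/3) (3 - tr B * tr B^-1 / 3), and tr(Cof B) = det B * tr B^-1 turns this into
   the stated formula.  By Cauchy-Schwarz applied to <F, F^-T> = 3 we have
   tr B * tr B^-1 >= 9, with equality iff F^-T is parallel to F, i.e. iff B is a positive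
   multiple of the identity, i.e. iff F is a positive multiple of a rotation.  Finally,
   along the Simo-Hughes flow d/dt det(Cbar_p^-1) is a product of nonzero factors and of the
   same scalar <F^-1 (dev3 tau) F^-T, 1>, so it vanishes exactly on R+ . SO(3). *)

lemma matrix_mul_diff_left: "(A::real^'n^'m) ** (B - C) = A ** B - A ** C"
  by (simp add: vec_eq_iff matrix_matrix_mult_def sum_subtractf algebra_simps)

lemma matrix_mul_diff_right: "((B::real^'n^'m) - C) ** A = B ** A - C ** A"
  by (simp add: vec_eq_iff matrix_matrix_mult_def sum_subtractf algebra_simps)

lemma trace_scaleR: "trace (c *\<^sub>R (A::real^'n^'n)) = c * trace A"
  by (simp add: trace_def sum_distrib_left)

lemma trace_transpose: "trace (transpose (A::real^'n^'n)) = trace A"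
  by (simp add: trace_def transpose_def)

(* The Frobenius pairing trace (A B^T) is the Euclidean inner product of the matrix entries;
   this is what lets Cauchy-Schwarz act on matrices. *)
lemma trace_mul_transpose: "trace ((A::real^'n^'n) ** transpose B) = A \<bullet> B"
  by (simp add: trace_def inner_vec_def matrix_matrix_mult_def transpose_def mult.commute)

lemma det_scaleR: "det (c *\<^sub>R (A::real^'n^'n)) = c ^ CARD('n) * det A"
proof -
  have "c *\<^sub>R A = mat c ** A"
    by (simp add: vec_eq_iff matrix_matrix_mult_def mat_def if_distrib if_distribR cong: if_cong)
  then show ?thesis
    using det_matrix_scaleR[of c, where 'n='n] by (simp add: det_mul matrix_scaleR)
qed

lemma matrix_inv_cancel:
  assumes "det (A::real^'n^'n) \<noteq> 0"
  shows "A ** matrix_inv A = mat 1" and "matrix_inv A ** A = mat 1"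
proof -
  have "\<exists>A'. A ** A' = mat 1 \<and> A' ** A = mat 1"
    using assms invertible_det_nz unfolding invertible_def by blast
  then have "A ** matrix_inv A = mat 1 \<and> matrix_inv A ** A = mat 1"
    unfolding matrix_inv_def by (rule someI_ex)
  then show "A ** matrix_inv A = mat 1" and "matrix_inv A ** A = mat 1" by auto
qed

lemma matrix_inv_unique:
  assumes "(A::real^'n^'n) ** B = mat 1"
  shows "matrix_inv A = B"
proof -
  have "det A * det B = 1" using assms det_mul[of A B] by simp
  then have "matrix_inv A ** A = mat 1" using matrix_inv_cancel by force
  then have "matrix_inv A = matrix_inv A ** (A ** B)" using assms by simp
  also have "\<dots> = B" by (simp add: matrix_mul_assoc \<open>matrix_inv A ** A = mat 1\<close>)
  finally show ?thesis .
qed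

lemma matrix_inv_transpose:
  assumes "det (A::real^'n^'n) \<noteq> 0"
  shows "matrix_inv (transpose A) = transpose (matrix_inv A)"
  by (rule matrix_inv_unique)
     (metis matrix_inv_cancel(2)[OF assms] matrix_transpose_mul transpose_mat)

lemma matrix_inv_mul:
  assumes "det (A::real^'n^'n) \<noteq> 0" and "det B \<noteq> 0"
  shows "matrix_inv (A ** B) = matrix_inv B ** matrix_inv A"
  by (rule matrix_inv_unique)
     (metis assms matrix_inv_cancel(1) matrix_mul_assoc matrix_mul_rid)

lemma trace_conjugate:
  assumes "det (P::real^'n^'n) \<noteq> 0"
  shows "trace (matrix_inv P ** X ** P) = trace X"
proof -
  have "trace (matrix_inv P ** X ** P) = trace (P ** (matrix_inv P ** X))" by (rule trace_mul_sym)
  also have "\<dots> = trace X" by (simp add: matrix_mul_assoc matrix_inv_cancel(1)[OF assms])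
  finally show ?thesis .
qed

(* <F, F^-T> = trace (F F^-1) = n: the pairing that drives the Cauchy-Schwarz argument. *)
lemma inner_inverse_transpose:
  assumes "det (F::real^'n^'n) \<noteq> 0"
  shows "F \<bullet> transpose (matrix_inv F) = real CARD('n)"
  by (metis trace_mul_transpose transpose_transpose matrix_inv_cancel(1)[OF assms] trace_I of_nat_id)

lemma norm_square_trace: "norm (A::real^'n^'n) ^ 2 = trace (A ** transpose A)"
  by (simp add: power2_norm_eq_inner trace_mul_transpose)

(* Since <F, F^-T> = n, Cauchy-Schwarz gives tr B * tr B^-1 >= n^2 for B = F F^T (note
   B^-1 = F^-T F^-1).  Equality holds exactly when F^-T is a positive multiple of F, i.e. when
   B is a positive multiple of the identity. *)
lemma CG_trace_product_eq_iff:
  assumes "det (F::real^'n^'n) \<noteq> 0"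
  shows "trace (F ** transpose F) * trace (matrix_inv F ** transpose (matrix_inv F)) = real CARD('n) ^ 2
         \<longleftrightarrow> (\<exists>c>0. F ** transpose F = c *\<^sub>R mat 1)"
    (is "?tB * ?tG = _ \<longleftrightarrow> _")
proof
  define G where "G = matrix_inv F"
  define H where "H = transpose G"
  have FG: "F ** G = mat 1" using matrix_inv_cancel(1)[OF assms] G_def by simp
  have FH: "F \<bullet> H = real CARD('n)" using inner_inverse_transpose[OF assms] G_def H_def by simp
  have norms: "norm F ^ 2 = ?tB" "norm H ^ 2 = ?tG"
    unfolding norm_square_trace H_def G_def transpose_transpose
    by (rule refl, rule trace_mul_sym)
  assume "?tB * ?tG = real CARD('n) ^ 2"
  then have "(norm F * norm H) ^ 2 = (F \<bullet> H) ^ 2" using norms FH by (simp add: power_mult_distrib)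
  then have CS_eq: "F \<bullet> H = norm F * norm H" using FH by (simp add: power2_eq_iff_nonneg)
  then have parallel: "norm F *\<^sub>R H = norm H *\<^sub>R F" using norm_cauchy_schwarz_eq by blast
  have "norm F > 0" "norm H > 0" using FH CS_eq by (auto simp: zero_less_mult_iff)
  define k where "k = norm H / norm F"
  have "k > 0" using \<open>norm F > 0\<close> \<open>norm H > 0\<close> k_def by simp
  have "H = (1 / norm F) *\<^sub>R (norm F *\<^sub>R H)" using \<open>norm F > 0\<close> by simp
  also have "\<dots> = k *\<^sub>R F" unfolding parallel k_def by simp
  finally have "G = k *\<^sub>R transpose F" unfolding H_def by (metis transpose_transpose transpose_scalar)
  then have kB: "k *\<^sub>R (F ** transpose F) = mat 1" using FG by (simp add: matrix_scalar_ac scalar_matrix_assoc)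
  have "F ** transpose F = (1/k) *\<^sub>R (k *\<^sub>R (F ** transpose F))" using \<open>k > 0\<close> by simp
  then have "F ** transpose F = (1/k) *\<^sub>R mat 1" unfolding kB .
  then show "\<exists>c>0. F ** transpose F = c *\<^sub>R mat 1" using \<open>k > 0\<close> by (intro exI[of _ "1/k"]) simp
next
  assume "\<exists>c>0. F ** transpose F = c *\<^sub>R mat 1"
  then obtain c where "c > 0" and B: "F ** transpose F = c *\<^sub>R mat 1" by auto
  have "transpose F = matrix_inv F ** (F ** transpose F)"
    by (simp add: matrix_mul_assoc matrix_inv_cancel(2)[OF assms])
  then have "matrix_inv F = (1/c) *\<^sub>R transpose F" using \<open>c > 0\<close> B by (simp add: matrix_scalar_ac)
  then have "?tG = (1/c)^2 * trace (transpose F ** F)"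
    by (simp add: matrix_scalar_ac scalar_matrix_assoc[symmetric] trace_scaleR transpose_scalar power2_eq_square)
  also have "trace (transpose F ** F) = c * real CARD('n)" using B trace_mul_sym[of "transpose F" F]
    by (simp add: trace_scaleR trace_I)
  finally show "?tB * ?tG = real CARD('n) ^ 2"
    using B \<open>c > 0\<close> by (simp add: trace_scaleR trace_I power2_eq_square)
qed

(* F F^T is a positive multiple of the identity iff F is a positive multiple of a rotation
   (the sign of det F rules out rotoinversions). *)
lemma conformal_iff_scaled_rotation:
  assumes "det (F::real^'n^'n) > 0"
  shows "(\<exists>c>0. F ** transpose F = c *\<^sub>R mat 1) \<longleftrightarrow> (\<exists>s Q. s > 0 \<and> rotation_matrix Q \<and> F = s *\<^sub>R Q)"
proof
  assume "\<exists>c>0. F ** transpose F = c *\<^sub>R mat 1"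
  then obtain c where "c > 0" and B: "F ** transpose F = c *\<^sub>R mat 1" by auto
  define s where "s = sqrt c"
  define Q where "Q = (1/s) *\<^sub>R F"
  have s: "s > 0" "s * s = c" using \<open>c > 0\<close> s_def by auto
  have "Q ** transpose Q = (1/(s * s)) *\<^sub>R (F ** transpose F)"
    unfolding Q_def by (simp add: matrix_scalar_ac scalar_matrix_assoc[symmetric] transpose_scalar)
  also have "\<dots> = mat 1" using B \<open>c > 0\<close> by (simp add: s(2))
  finally have QQ: "Q ** transpose Q = mat 1" .
  then have orth: "orthogonal_matrix Q"
    using matrix_left_right_inverse orthogonal_matrix_def by blast
  have "det Q * det Q = 1" using QQ det_mul[of Q "transpose Q"] by simp
  moreover have "det Q > 0" unfolding Q_def using s assms by (simp add: det_scaleR)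
  moreover have "(det Q - 1) * (det Q + 1) = det Q * det Q - 1" by (simp add: algebra_simps)
  ultimately have "det Q = 1" by simp
  then have "rotation_matrix Q" using orth rotation_matrix_def by blast
  moreover have "F = s *\<^sub>R Q" unfolding Q_def using s by simp
  ultimately show "\<exists>s Q. s > 0 \<and> rotation_matrix Q \<and> F = s *\<^sub>R Q" using s by blast
next
  assume "\<exists>s Q. s > 0 \<and> rotation_matrix Q \<and> F = s *\<^sub>R Q"
  then obtain s Q where "s > 0" "rotation_matrix Q" and F: "F = s *\<^sub>R Q" by blast
  then have "Q ** transpose Q = mat 1" unfolding rotation_matrix_def orthogonal_matrix_def by blast
  then have "F ** transpose F = (s * s) *\<^sub>R mat 1"
    unfolding F by (simp add: matrix_scalar_ac scalar_matrix_assoc[symmetric] transpose_scalar)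
  then show "\<exists>c>0. F ** transpose F = c *\<^sub>R mat 1" using \<open>s > 0\<close> by (intro exI[of _ "s * s"]) simp
qed

lemma frob_inner_mat1: "frob_inner X (mat 1) = trace X" "frob_inner (mat 1) X = trace X"
  by (simp_all add: frob_inner_def trace_transpose)

lemma dev3_scaleR: "dev3 (c *\<^sub>R X) = c *\<^sub>R dev3 X"
  by (simp add: dev3_def trace_scaleR scaleR_diff_right)

(* Pulling dev3 B back with F^-1 gives tr(F^-1 (dev3 B) F^-T) = 3 - tr B * tr B^-1 / 3,
   because F^-1 B F^-T = 1 and F^-1 F^-T has the trace of B^-1. *)
lemma trace_pullback_dev3:
  fixes F :: mat3
  assumes "det F \<noteq> 0"
  shows "trace (matrix_inv F ** dev3 (F ** transpose F) ** transpose (matrix_inv F))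
         = 3 - trace (F ** transpose F) * trace (matrix_inv F ** transpose (matrix_inv F)) / 3"
proof -
  define G where "G = matrix_inv F"
  have GF: "G ** F = mat 1" using matrix_inv_cancel(2)[OF assms] G_def by simp
  have "G ** (F ** transpose F) ** transpose G = (G ** F) ** transpose (G ** F)"
    by (simp add: matrix_mul_assoc matrix_transpose_mul)
  then have GBG: "G ** (F ** transpose F) ** transpose G = mat 1" using GF by simp
  show ?thesis
    unfolding G_def[symmetric] dev3_def
    by (simp add: matrix_mul_diff_left matrix_mul_diff_right matrix_scalar_ac
        scalar_matrix_assoc[symmetric] GBG trace_sub trace_scaleR trace_I)
qed

(* tr (Cof B) = det B * tr B^-1 for B = F F^T, since Cof B = det B * B^-1 for symmetric B. *)
lemma trace_Cof_CG:
  fixes F :: mat3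
  assumes "det F \<noteq> 0"
  shows "trace (Cof (F ** transpose F))
         = det (F ** transpose F) * trace (matrix_inv F ** transpose (matrix_inv F))"
proof -
  have dFT: "det (transpose F) \<noteq> 0" using assms by simp
  have "matrix_inv (transpose (F ** transpose F)) = transpose (matrix_inv F) ** matrix_inv F"
    by (simp add: matrix_transpose_mul matrix_inv_mul[OF assms dFT] matrix_inv_transpose[OF assms])
  then show ?thesis
    unfolding Cof_def trace_scaleR
    by (simp add: trace_mul_sym[of "transpose (matrix_inv F)" "matrix_inv F"])
qed

(* Along the Simo-Hughes flow, <1, d/dt[Cbar_p^-1] Cbar_p> is a scalar multiple of
   tr(F_e^-1 (dev3 tau) F_e^-T): the F_p factors cancel by invariance of the trace. *)
lemma trace_SH_rhs_Cbar:
  assumes "det Fe \<noteq> 0" and "det Fp \<noteq> 0"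
  shows "trace (SH_rhs lam Fe Fp \<tau> ** Cbar_p Fp)
         = - (2/3) * lam * trace (Bmat Fe) / frob_norm (dev3 \<tau>)
             / det (transpose Fp ** Fp) powr (1/3)
           * trace (matrix_inv Fe ** dev3 \<tau> ** transpose (matrix_inv Fe))"
proof -
  define G where "G = matrix_inv Fe"
  define Pi where "Pi = matrix_inv Fp"
  define X where "X = G ** dev3 \<tau> ** transpose G"
  define k where "k = - (2/3) * lam * trace (Bmat Fe) / frob_norm (dev3 \<tau>)"
  define s where "s = 1 / det (transpose Fp ** Fp) powr (1/3)"
  have inv_FeFp: "matrix_inv (Fe ** Fp) = Pi ** G"
    unfolding G_def Pi_def by (rule matrix_inv_mul[OF assms])
  have inv_FeFpT: "matrix_inv (transpose (Fe ** Fp)) = transpose G ** transpose Pi"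
    using matrix_inv_transpose[of "Fe ** Fp"] assms inv_FeFp
    by (simp add: det_mul matrix_transpose_mul)
  have PiT_PT: "transpose Pi ** transpose Fp = mat 1"
    by (metis Pi_def matrix_inv_cancel(1)[OF assms(2)] matrix_transpose_mul transpose_mat)
  have rhs: "SH_rhs lam Fe Fp \<tau> = k *\<^sub>R (Pi ** X ** transpose Pi)"
    unfolding SH_rhs_def inv_FeFp inv_FeFpT X_def k_def
    by (simp add: matrix_scalar_ac scalar_matrix_assoc[symmetric] matrix_mul_assoc)
  have "SH_rhs lam Fe Fp \<tau> ** Cbar_p Fp
        = (k * s) *\<^sub>R (Pi ** X ** (transpose Pi ** transpose Fp) ** Fp)"
    unfolding rhs Cbar_p_def s_def[symmetric]
    by (simp add: matrix_scalar_ac scalar_matrix_assoc[symmetric] matrix_mul_assoc)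
  also have "\<dots> = (k * s) *\<^sub>R (Pi ** X ** Fp)" unfolding PiT_PT by simp
  finally have "trace (SH_rhs lam Fe Fp \<tau> ** Cbar_p Fp) = k * s * trace X"
    using trace_conjugate[OF assms(2)] unfolding Pi_def[symmetric] by (simp add: trace_scaleR)
  then show ?thesis unfolding X_def G_def k_def s_def by simp
qed

(* Hence d/dt det(Cbar_p^-1) vanishes exactly when tr(F_e^-1 (dev3 tau) F_e^-T) does: all
   other factors are nonzero, and a nonzero trace forces dev3 tau, hence its norm, to be nonzero. *)
lemma SH_ddet_eq_zero_iff:
  assumes "lam > 0" and "det Fe \<noteq> 0" and "det Fp \<noteq> 0"
  shows "SH_ddet lam Fe Fp \<tau> = 0
         \<longleftrightarrow> trace (matrix_inv Fe ** dev3 \<tau> ** transpose (matrix_inv Fe)) = 0"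
    (is "_ \<longleftrightarrow> ?v = 0")
proof -
  have det_CpT: "det (transpose Fp ** Fp) > 0"
    using assms(3) by (auto simp: det_mul zero_less_mult_iff linorder_neq_iff)
  then have "det (Cbar_p Fp) \<noteq> 0" unfolding Cbar_p_def by (simp add: det_scaleR)
  then have "det (Cbar_p Fp) * det (matrix_inv (Cbar_p Fp)) = 1"
    by (metis det_I det_mul matrix_inv_cancel(1))
  then have det_inv: "det (matrix_inv (Cbar_p Fp)) \<noteq> 0" by auto
  have "det (0::mat3) = 0" by (simp add: det_3)
  then have "Fe \<noteq> 0" using assms(2) by auto
  then have trB: "trace (Bmat Fe) > 0" unfolding Bmat_def trace_mul_transpose by simp
  have "frob_norm (dev3 \<tau>) \<noteq> 0" if "?v \<noteq> 0"
  proof -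
    have "dev3 \<tau> \<noteq> 0" using that by (auto simp: trace_def)
    then show ?thesis unfolding frob_norm_def frob_inner_def trace_mul_transpose by simp
  qed
  then show ?thesis
    unfolding SH_ddet_def frob_inner_mat1 trace_SH_rhs_Cbar[OF assms(2,3)]
    using det_inv det_CpT trB assms(1) by auto
qed

theorem mainTheorem15:
  fixes \<mu> \<kappa> :: real and Fe \<tau> :: "real^3^3"
  assumes "\<mu> > 0" and "\<kappa> > 0" and "Fe \<in> GLplus"
    and "dev3 \<tau> = \<mu> *\<^sub>R dev3 ((1 / (det (Bmat Fe)) powr (1/3)) *\<^sub>R Bmat Fe)"
  shows "frob_inner (matrix_inv Fe ** dev3 \<tau> ** matrix_inv (transpose Fe)) (mat 1)
           = \<mu> / (det (Bmat Fe)) powr (4/3)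
             * (3 * det (Bmat Fe) - (1/3) * trace (Bmat Fe) * trace (Cof (Bmat Fe)))
    \<and> (frob_inner (matrix_inv Fe ** dev3 \<tau> ** matrix_inv (transpose Fe)) (mat 1) = 0
           \<longleftrightarrow> (\<exists>c>0. Bmat Fe = c *\<^sub>R mat 1))
    \<and> ((\<exists>c>0. Bmat Fe = c *\<^sub>R mat 1) \<longleftrightarrow> Fe \<in> RplusSO3)
    \<and> (\<forall>lam Fp. lam > 0 \<longrightarrow> Fp \<in> GLplus \<longrightarrow>
           (SH_ddet lam Fe Fp \<tau> \<noteq> 0 \<longleftrightarrow> Fe \<notin> RplusSO3))"
proof -
  have dFe: "det Fe > 0" using assms(3) unfolding GLplus_def by simp
  define B where "B = Bmat Fe"
  define t where "t = trace (matrix_inv Fe ** transpose (matrix_inv Fe))"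
  define v where "v = trace (matrix_inv Fe ** dev3 \<tau> ** transpose (matrix_inv Fe))"
  have dB: "det B > 0" unfolding B_def Bmat_def using dFe by (simp add: det_mul)
  have lhs: "frob_inner (matrix_inv Fe ** dev3 \<tau> ** matrix_inv (transpose Fe)) (mat 1) = v"
    unfolding v_def frob_inner_mat1 matrix_inv_transpose[OF less_imp_neq[OF dFe, symmetric]] ..
  have v: "v = \<mu> / det B powr (1/3) * (3 - trace B * t / 3)"
    unfolding v_def assms(4) dev3_scaleR B_def[symmetric]
    using trace_pullback_dev3[of Fe] dFe
    by (simp add: matrix_scalar_ac scalar_matrix_assoc[symmetric] trace_scaleR B_def Bmat_def t_def)
  have "det B powr (4/3) = det B * det B powr (1/3)"
    using powr_add[of "det B" 1 "1/3"] dB by simp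
  then have formula: "v = \<mu> / det B powr (4/3) * (3 * det B - (1/3) * trace B * trace (Cof B))"
    unfolding v B_def Bmat_def trace_Cof_CG[OF less_imp_neq[OF dFe, symmetric]]
    using dB by (simp add: field_simps B_def Bmat_def t_def)
  have vanish: "v = 0 \<longleftrightarrow> (\<exists>c>0. B = c *\<^sub>R mat 1)"
    using CG_trace_product_eq_iff[of Fe] dFe assms(1) dB
    unfolding v B_def Bmat_def t_def by auto
  have conformal: "(\<exists>c>0. B = c *\<^sub>R mat 1) \<longleftrightarrow> Fe \<in> RplusSO3"
    unfolding B_def Bmat_def RplusSO3_def conformal_iff_scaled_rotation[OF dFe] by blast
  have "SH_ddet lam Fe Fp \<tau> \<noteq> 0 \<longleftrightarrow> Fe \<notin> RplusSO3" if "lam > 0" "Fp \<in> GLplus" for lam Fp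
    using SH_ddet_eq_zero_iff[of lam Fe Fp \<tau>] that dFe vanish conformal
    unfolding GLplus_def v_def by auto
  then show ?thesis using lhs formula vanish conformal unfolding B_def by blast
qed

end
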